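(* Let $\mathcal I$ be a finite set with $|\mathcal I|\ge 2$, $\nu\in(0,1)$, and $L\ge 1$ an integer. Define functions on $\mathbb R^{\mathcal I}$ by backward recursion: $$V_L^*(\mathbf m)=\max_{a\in\mathcal I}\frac{e^{m[a]}}{\sum_{l\in\mathcal I}e^{m[l]}},$$ and for $k=L-1,L-2,\dots,0$ and $a\in\mathcal I$, $$q_k(\mathbf m,a)=\int_0^\infty V_{k+1}^*\big(\mathbf m+J(y)\boldsymbol\delta[a]\big)\,f(y\mid\mathbf m,a)\,dy,\qquad V_k^*(\mathbf m)=\max_{a\in\mathcal I}q_k(\mathbf m,a),$$ where $J(y)=(1-\nu)y+\ln\nu$, $\boldsymbol\delta[a]\in\mathbb R^{\mathcal I}$ is the vector with entries $\delta[a,x]$, $x\in\mathcal I$, and, with $p_a(\mathbf m)=e^{m[a]}/\sum_{l\in\mathcal I}e^{m[l]}$, $$f(y\mid\mathbf m,a)=p_a(\mathbf m)\,\nu e^{-\nu y}+\big(1-p_a(\mathbf m)\big)e^{-y},\quad y\ge 0.$$ Then for every $k\in\{0,\dots,L-1\}$, $\mathbf m\in\mathbb R^{\mathcal I}$ and $a\in\mathcal I$, $$q_k(\mathbf m,a)\ \ge\ q_k^{LB}(\mathbf m,a):=\frac{1}{\sum_{l\in\mathcal I}e^{m[l]}}\Big[\xi(a;\mathbf m)+\exp\Big\{\frac{\min_{x_i\neq x_j}\big(m[x_i]-\nu m[x_j]\big)}{1-\nu}\Big\}\,h(\nu)\sum_{n=1}^{L-k-1}g(\nu)^n\Big],$$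 (where $\sum_{n=1}^{L-k-1}g(\nu)^n=\frac{g(\nu)-g(\nu)^{L-k}}{1-g(\nu)}$ when $g(\nu)\ne1$), and $$q_k(\mathbf m,a)\ \le\ q_k^{UB}(\mathbf m,a):=\frac{[1+h(\nu)]^{L-k-1}}{\sum_{l\in\mathcal I}e^{m[l]}}\,\xi(a;\mathbf m).$$ Moreover, if $x_{[1]},x_{[2]},\dots$ is an ordering of $\mathcal I$ with $m[x_{[1]}]\ge m[x_{[2]}]\ge\cdots$, then for every $k\in\{0,\dots,L-1\}$, $$q_k^{LB}(\mathbf m,x_{[2]})=\max_{a\in\mathcal I}q_k^{LB}(\mathbf m,a)\le V_k^*(\mathbf m)\le \max_{a\in\mathcal I}q_k^{UB}(\mathbf m,a)=q_k^{UB}(\mathbf m,x_{[2]}).$$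
   Context: The minimum $\min_{x_i\neq x_j}$ ranges over ordered pairs of distinct elements of $\mathcal I$. For $a\in\mathcal I$, $M_a=\max_{\hat a\neq a}m[\hat a]$ and $$\xi(a;\mathbf m)=\begin{cases}\exp\{m[a]\}, & \text{if } M_a-m[a]<\ln\nu,\\ \exp\{M_a\}+h(\nu)\exp\Big\{\dfrac{m[a]-\nu M_a}{1-\nu}\Big\}, & \text{otherwise,}\end{cases}$$ $h(\nu)=\exp\{\frac{\nu}{1-\nu}\ln\nu\}-\exp\{\frac{\ln\nu}{1-\nu}\}>0$ and $g(\nu)=\exp\{\frac{\ln\nu}{1-\nu}\}\big[\frac{1}{1+\nu}-\frac{\ln\nu}{1-\nu}\big]>0$. Interpretation: $\mathbf m$ is the log-belief (preference) vector over beam indices, $q_k$ the Q-function and $V_k^*$ the optimal value (maximal probability of correct alignment at the end of $L$ beam-alignment slots). *)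

theory Defs
  imports "HOL-Analysis.Analysis"
begin

definition Zsum :: "('i::finite \<Rightarrow> real) \<Rightarrow> real" where
  "Zsum m = (\<Sum>l\<in>UNIV. exp (m l))"

definition pa :: "('i::finite \<Rightarrow> real) \<Rightarrow> 'i \<Rightarrow> real" where
  "pa m a = exp (m a) / Zsum m"

definition Jfun :: "real \<Rightarrow> real \<Rightarrow> real" where
  "Jfun \<nu> y = (1 - \<nu>) * y + ln \<nu>"

definition deltav :: "'i \<Rightarrow> 'i \<Rightarrow> real" where
  "deltav a x = (if x = a then 1 else 0)"

definition fdens :: "real \<Rightarrow> ('i::finite \<Rightarrow> real) \<Rightarrow> 'i \<Rightarrow> real \<Rightarrow> real" where
  "fdens \<nu> m a y = pa m a * \<nu> * exp (- \<nu> * y) + (1 - pa m a) * exp (- y)"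

text \<open>Value with n beam-alignment slots remaining: Wrem nu n = V*_{L-n}.\<close>
primrec Wrem :: "real \<Rightarrow> nat \<Rightarrow> ('i::finite \<Rightarrow> real) \<Rightarrow> real" where
  "Wrem \<nu> 0 m = Max (range (\<lambda>a. pa m a))"
| "Wrem \<nu> (Suc n) m = Max (range (\<lambda>a.
      LINT y:{0..}|lborel. Wrem \<nu> n (\<lambda>x. m x + Jfun \<nu> y * deltav a x) * fdens \<nu> m a y))"

definition Vstar :: "real \<Rightarrow> nat \<Rightarrow> nat \<Rightarrow> ('i::finite \<Rightarrow> real) \<Rightarrow> real" where
  "Vstar \<nu> L k m = Wrem \<nu> (L - k) m"

definition qfun :: "real \<Rightarrow> nat \<Rightarrow> nat \<Rightarrow> ('i::finite \<Rightarrow> real) \<Rightarrow> 'i \<Rightarrow> real" where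
  "qfun \<nu> L k m a =
     (LINT y:{0..}|lborel. Vstar \<nu> L (k + 1) (\<lambda>x. m x + Jfun \<nu> y * deltav a x) * fdens \<nu> m a y)"

definition hfun :: "real \<Rightarrow> real" where
  "hfun \<nu> = exp (\<nu> / (1 - \<nu>) * ln \<nu>) - exp (ln \<nu> / (1 - \<nu>))"

definition gfun :: "real \<Rightarrow> real" where
  "gfun \<nu> = exp (ln \<nu> / (1 - \<nu>)) * (1 / (1 + \<nu>) - ln \<nu> / (1 - \<nu>))"

definition Mmax :: "('i::finite \<Rightarrow> real) \<Rightarrow> 'i \<Rightarrow> real" where
  "Mmax m a = Max (m ` (UNIV - {a}))"

definition xi :: "real \<Rightarrow> 'i::finite \<Rightarrow> ('i \<Rightarrow> real) \<Rightarrow> real" where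
  "xi \<nu> a m = (if Mmax m a - m a < ln \<nu> then exp (m a)
     else exp (Mmax m a) + hfun \<nu> * exp ((m a - \<nu> * Mmax m a) / (1 - \<nu>)))"

definition minpair :: "real \<Rightarrow> ('i::finite \<Rightarrow> real) \<Rightarrow> real" where
  "minpair \<nu> m = Min {m xi - \<nu> * m xj | xi xj. xi \<noteq> xj}"

definition qLB :: "real \<Rightarrow> nat \<Rightarrow> nat \<Rightarrow> ('i::finite \<Rightarrow> real) \<Rightarrow> 'i \<Rightarrow> real" where
  "qLB \<nu> L k m a = (1 / Zsum m) * (xi \<nu> a m
     + exp (minpair \<nu> m / (1 - \<nu>)) * hfun \<nu> * (\<Sum>n\<in>{1..L - k - 1}. gfun \<nu> ^ n))"

definition qUB :: "real \<Rightarrow> nat \<Rightarrow> nat \<Rightarrow> ('i::finite \<Rightarrow> real) \<Rightarrow> 'i \<Rightarrow> real" where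
  "qUB \<nu> L k m a = (1 + hfun \<nu>) ^ (L - k - 1) / Zsum m * xi \<nu> a m"

end

theory Submission
  imports Defs
begin

text \<open>Probing beam a and observing y turns the belief m into m + J(y) \<delta>[a], and the density
  of the observation equals Z(m + J(y) \<delta>[a]) exp(-y) / Z(m), where Z is the softmax partition
  function. So each slot multiplies the unnormalised value Z \<cdot> V by an integral against exp(-y);
  with one slot left this integral is exactly \<xi>(a; m).

  By convexity \<xi>(a; m) \<le> (1 + h) exp(max m), so each further slot costs at most a factor
  1 + h. Conversely, one slot later, probing a non-maximal index gains
  h exp(min{m[i] - \<nu> m[j] | i \<noteq> j} / (1 - \<nu>)); an observation changes this minimum by at least
  min(J, -\<nu> J), and integrating the resulting factor against exp(-y) gives g, whence the
  geometric sum. Finally \<xi>(\<cdot>; m) is maximal at the second-largest coordinate.\<close>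

definition shift :: "('i \<Rightarrow> real) \<Rightarrow> 'i \<Rightarrow> real \<Rightarrow> 'i \<Rightarrow> real" where
  "shift m a t = (\<lambda>x. m x + t * deltav a x)"

lemma shift_same [simp]: "shift m a t a = m a + t"
  by (simp add: shift_def deltav_def)

lemma shift_other [simp]: "x \<noteq> a \<Longrightarrow> shift m a t x = m x"
  by (simp add: shift_def deltav_def)

lemma exists_ne_if_card_ge_2:
  assumes "CARD('i::finite) \<ge> 2" shows "\<exists>b::'i. b \<noteq> a"
proof (rule ccontr)
  assume "\<nexists>b::'i. b \<noteq> a"
  hence "(UNIV::'i set) = {a}" by auto
  hence "CARD('i) = card {a}" by simp
  thus False using assms by simp
qed

lemma Max_range_ge: "(f::'i::finite \<Rightarrow> 'a::linorder) b \<le> Max (range f)"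
  by (rule Max_ge) auto

lemma Max_range_eqI: "(\<And>b. f b \<le> f b0) \<Longrightarrow> Max (range f) = ((f::'i::finite \<Rightarrow> 'a::linorder) b0)"
  by (rule Max_eqI) auto

lemma Max_range_le: "(\<And>b. (f::'i::finite \<Rightarrow> 'a::linorder) b \<le> c) \<Longrightarrow> Max (range f) \<le> c"
  by (simp add: Max_le_iff)

lemma ex_argmax: "\<exists>b0. \<forall>b. (f::'i::finite \<Rightarrow> 'a::linorder) b \<le> f b0"
proof -
  have "Max (range f) \<in> range f" by (rule Max_in) auto
  then obtain b0 where "f b0 = Max (range f)" by (metis rangeE)
  thus ?thesis using Max_range_ge[of f] by metis
qed

lemma geometric_sum_Suc: "(\<Sum>j\<in>{1..Suc n}. (g::'a::comm_semiring_1)^j) = g * (1 + (\<Sum>j\<in>{1..n}. g^j))"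
proof -
  have "g * (\<Sum>j\<in>{1..n}. g^j) = (\<Sum>j\<in>{Suc 1..Suc n}. g^j)"
    by (simp add: sum_distrib_left sum.shift_bounds_cl_Suc_ivl del: sum.cl_ivl_Suc)
  thus ?thesis by (simp add: sum.atLeast_Suc_atMost distrib_left del: sum.cl_ivl_Suc)
qed

lemma Zsum_pos: "0 < Zsum (m::'i::finite \<Rightarrow> real)"
  unfolding Zsum_def by (rule sum_pos) auto

lemma Zsum_neq_0: "Zsum (m::'i::finite \<Rightarrow> real) \<noteq> 0"
  using Zsum_pos[of m] by simp

lemma Zsum_remove: "Zsum (m::'i::finite \<Rightarrow> real) = exp (m a) + (\<Sum>l\<in>UNIV-{a}. exp (m l))"
  unfolding Zsum_def by (subst sum.remove[of UNIV a]) auto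

lemma Zsum_shift: "Zsum (shift m a t) = Zsum (m::'i::finite \<Rightarrow> real) - exp (m a) + exp (m a + t)"
proof -
  have "(\<Sum>l\<in>UNIV-{a}. exp (shift m a t l)) = (\<Sum>l\<in>UNIV-{a}. exp (m l))"
    by (rule sum.cong) auto
  thus ?thesis using Zsum_remove[of "shift m a t" a] Zsum_remove[of m a] by simp
qed

lemma continuous_on_Zsum: "continuous_on UNIV (Zsum :: ('i::finite \<Rightarrow> real) \<Rightarrow> real)"
  unfolding Zsum_def by (intro continuous_intros) auto

lemma pa_pos: "0 < pa (m::'i::finite \<Rightarrow> real) a"
  unfolding pa_def using Zsum_pos[of m] by simp

lemma pa_le_1: "pa (m::'i::finite \<Rightarrow> real) a \<le> 1"
proof -
  have "exp (m a) \<le> Zsum m" unfolding Zsum_def by (rule member_le_sum) auto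
  thus ?thesis unfolding pa_def using Zsum_pos[of m] by simp
qed

lemma Wrem_0_eq: "Wrem \<nu> 0 m = exp (Max (range m)) / Zsum (m::'i::finite \<Rightarrow> real)"
proof -
  obtain x1 where x1: "\<And>b. m b \<le> m x1" using ex_argmax by blast
  have "Max (range (pa m)) = pa m x1"
    by (rule Max_range_eqI) (use x1 Zsum_pos[of m] in \<open>auto simp: pa_def divide_right_mono\<close>)
  thus ?thesis using Max_range_eqI[of m x1] x1 by (simp add: pa_def)
qed

lemma Mmax_le_Max:
  assumes "CARD('i::finite) \<ge> 2" shows "Mmax m a \<le> Max (range (m::'i \<Rightarrow> real))"
  unfolding Mmax_def
  by (rule Max_mono) (use exists_ne_if_card_ge_2[OF assms, of a] in auto)

lemma Mmax_eq_if_argmax: "a \<noteq> x1 \<Longrightarrow> \<forall>y. (m::'i::finite \<Rightarrow> real) y \<le> m x1 \<Longrightarrow> Mmax m a = m x1"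
  unfolding Mmax_def by (rule Max_eqI) auto

lemma Max_range_shift:
  assumes "CARD('i::finite) \<ge> 2"
  shows "Max (range (shift (m::'i \<Rightarrow> real) a t)) = max (m a + t) (Mmax m a)"
proof -
  have "range (shift m a t) = insert (m a + t) (shift m a t ` (UNIV - {a}))"
    using image_insert[of "shift m a t" a "UNIV - {a}"] by simp
  moreover have "shift m a t ` (UNIV - {a}) = m ` (UNIV - {a})" by (rule image_cong) auto
  moreover have "UNIV - {a} \<noteq> {}" using exists_ne_if_card_ge_2[OF assms, of a] by blast
  ultimately show ?thesis unfolding Mmax_def by (simp add: Max_insert)
qed

lemma fdens_eq_Zsum_shift:
  assumes "0 < \<nu>"
  shows "fdens \<nu> m a y = Zsum (shift m a (Jfun \<nu> y)) * exp (-y) / Zsum (m::'i::finite \<Rightarrow> real)"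
proof -
  have "exp (m a + Jfun \<nu> y) * exp (-y) = exp (m a) * exp (ln \<nu>) * exp (-\<nu>*y)"
    unfolding Jfun_def mult_exp_exp exp_add[symmetric] by (simp add: algebra_simps)
  hence "Zsum (shift m a (Jfun \<nu> y)) * exp (-y)
         = (Zsum m - exp (m a)) * exp (-y) + exp (m a) * \<nu> * exp (-\<nu>*y)"
    unfolding Zsum_shift using assms by (simp add: algebra_simps)
  thus ?thesis using Zsum_pos[of m] unfolding fdens_def pa_def by (simp add: field_simps)
qed

lemma fdens_nonneg: "0 < \<nu> \<Longrightarrow> 0 \<le> fdens \<nu> (m::'i::finite \<Rightarrow> real) a y"
  using Zsum_pos[of m] Zsum_pos[of "shift m a (Jfun \<nu> y)"] by (simp add: fdens_eq_Zsum_shift)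

lemma fdens_le:
  assumes "0 < \<nu>" shows "fdens \<nu> (m::'i::finite \<Rightarrow> real) a y \<le> \<nu> * exp (-\<nu>*y) + exp (-y)"
proof -
  have "pa m a * (\<nu> * exp (-\<nu>*y)) \<le> \<nu> * exp (-\<nu>*y)"
    using pa_le_1[of m a] assms by (simp add: mult_left_le_one_le)
  moreover have "(1 - pa m a) * exp (-y) \<le> exp (-y)"
    using pa_pos[of m a] by (simp add: mult_le_cancel_right1)
  moreover have "fdens \<nu> m a y = pa m a * (\<nu> * exp (-\<nu>*y)) + (1 - pa m a) * exp (-y)"
    unfolding fdens_def by (simp add: mult.assoc)
  ultimately show ?thesis by linarith
qed

lemma continuous_on_fdens: "continuous_on UNIV (\<lambda>m::'i::finite \<Rightarrow> real. fdens \<nu> m a y)"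
  unfolding fdens_def pa_def
  by (intro continuous_intros continuous_on_Zsum) (simp_all add: Zsum_neq_0)

lemma set_integrable_exp_neg:
  fixes a c K :: real assumes "0 < a"
  shows "set_integrable lborel {c..} (\<lambda>x. K * exp (-a*x))"
proof -
  have "(\<lambda>x::real. exp (-a*x)) integrable_on {c..}"
    using has_integral_exp_minus_to_infinity[OF assms] by blast
  hence "(\<lambda>x::real. exp (-a*x)) absolutely_integrable_on {c..}"
    by (rule nonnegative_absolutely_integrable_1) auto
  moreover have "(\<lambda>x. indicator {c..} x *\<^sub>R exp (-a*x)) \<in> borel_measurable lborel"
    by measurable
  ultimately have "set_integrable lborel {c..} (\<lambda>x. exp (-a*x))"
    unfolding set_integrable_def using integrable_completion by blast
  thus ?thesis by (rule set_integrable_mult_right)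
qed

lemma set_integral_exp_neg:
  fixes a c K :: real assumes "0 < a"
  shows "(LINT x:{c..}|lborel. K * exp (-a*x)) = K * exp (-a*c) / a"
proof -
  have "set_integrable lborel {c..} (\<lambda>x. exp (-a*x))"
    using set_integrable_exp_neg[OF assms, of c 1] by simp
  hence "(LINT x:{c..}|lborel. exp (-a*x)) = integral {c..} (\<lambda>x. exp (-a*x))"
    by (rule set_borel_integral_eq_integral(2))
  also have "\<dots> = exp (-a*c) / a"
    by (rule integral_unique[OF has_integral_exp_minus_to_infinity[OF assms]])
  finally show ?thesis by simp
qed

lemma set_integral_split_at:
  fixes f :: "real \<Rightarrow> real"
  assumes "a \<le> c" "set_integrable lborel {a..} f"
  shows "(LINT x:{a..}|lborel. f x) = (LINT x:{a..<c}|lborel. f x) + (LINT x:{c..}|lborel. f x)"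
proof -
  have "{a..} = {a..<c} \<union> {c..}" using assms(1) by auto
  moreover have "set_integrable lborel {a..<c} f" "set_integrable lborel {c..} f"
    by (rule set_integrable_subset[OF assms(2)]; use assms(1) in auto)+
  moreover have "{a..<c} \<inter> {c..} = {}" by auto
  ultimately show ?thesis by (simp add: set_integral_Un)
qed

text \<open>The smaller function need not be integrable: otherwise its integral is \<open>0\<close>.\<close>

lemma set_integral_mono_nonneg:
  fixes f g :: "real \<Rightarrow> real"
  assumes "set_integrable lborel A f" "\<And>x. x \<in> A \<Longrightarrow> g x \<le> f x" "\<And>x. x \<in> A \<Longrightarrow> 0 \<le> f x"
  shows "(LINT x:A|lborel. g x) \<le> (LINT x:A|lborel. f x)"
  using assms unfolding set_integrable_def set_lebesgue_integral_def
  by (intro integral_mono') (auto split: split_indicator)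

lemma set_integral_nonneg:
  fixes f :: "real \<Rightarrow> real"
  assumes "\<And>x. x \<in> A \<Longrightarrow> 0 \<le> f x"
  shows "0 \<le> (LINT x:A|lborel. f x)"
  unfolding set_lebesgue_integral_def using assms
  by (intro Bochner_Integration.integral_nonneg) (auto split: split_indicator)

lemma fdens_eq_exp_combination:
  "fdens \<nu> m a y = (pa m a * \<nu>) * exp (-\<nu>*y) + (1 - pa m a) * exp (-1*y)"
  unfolding fdens_def by simp

lemma set_integrable_fdens:
  "0 < \<nu> \<Longrightarrow> set_integrable lborel {0..} (fdens \<nu> (m::'i::finite \<Rightarrow> real) a)"
  unfolding fdens_eq_exp_combination by (intro set_integral_add(1); rule set_integrable_exp_neg) auto

lemma set_integral_fdens:
  assumes "0 < \<nu>" shows "(LINT y:{0..}|lborel. fdens \<nu> (m::'i::finite \<Rightarrow> real) a y) = 1"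
proof -
  have "(LINT y:{0..}|lborel. fdens \<nu> m a y)
        = (LINT y:{0..}|lborel. (pa m a * \<nu>) * exp (-\<nu>*y)) + (LINT y:{0..}|lborel. (1 - pa m a) * exp (-1*y))"
    unfolding fdens_eq_exp_combination
    by (rule set_integral_add(2); rule set_integrable_exp_neg) (use assms in auto)
  also have "\<dots> = 1"
    using assms by (simp only: set_integral_exp_neg) simp
  finally show ?thesis .
qed

lemma set_integrable_fdens_bound:
  "0 < (\<nu>::real) \<Longrightarrow> set_integrable lborel {0..} (\<lambda>y. \<nu> * exp (-\<nu>*y) + exp (-y))"
proof -
  assume "0 < \<nu>"
  have "set_integrable lborel {0..} (\<lambda>y. \<nu> * exp (-\<nu>*y) + 1 * exp (-1*y))"
    by (rule set_integral_add(1); rule set_integrable_exp_neg) (use \<open>0 < \<nu>\<close> in auto)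
  thus ?thesis by simp
qed

lemma set_integral_max_crossing:
  fixes E1 E2 :: "real \<Rightarrow> real"
  assumes c: "0 \<le> c"
    and below: "\<And>y. 0 \<le> y \<Longrightarrow> y < c \<Longrightarrow> E1 y \<le> E2 y" and above: "\<And>y. c \<le> y \<Longrightarrow> E2 y \<le> E1 y"
    and E1: "set_integrable lborel {0..} E1" and E2: "set_integrable lborel {0..} E2"
  shows "set_integrable lborel {0..} (\<lambda>y. max (E1 y) (E2 y))"
    and "(LINT y:{0..}|lborel. max (E1 y) (E2 y))
           = (LINT y:{0..}|lborel. E2 y) - (LINT y:{c..}|lborel. E2 y) + (LINT y:{c..}|lborel. E1 y)"
proof -
  have max_below: "max (E1 y) (E2 y) = E2 y" if "y \<in> {0..<c}" for y
    using below[of y] that by (simp add: max_absorb2)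
  have max_above: "max (E1 y) (E2 y) = E1 y" if "y \<in> {c..}" for y
    using above[of y] that by (simp add: max_absorb1)
  have E2_below: "set_integrable lborel {0..<c} E2"
    by (rule set_integrable_subset[OF E2]) auto
  have E1_above: "set_integrable lborel {c..} E1"
    by (rule set_integrable_subset[OF E1]) (use c in auto)
  have int_below: "set_integrable lborel {0..<c} (\<lambda>y. max (E1 y) (E2 y))"
    using E2_below by (rule set_integrable_cong[THEN iffD1, rotated -1]) (auto simp: max_below)
  have int_above: "set_integrable lborel {c..} (\<lambda>y. max (E1 y) (E2 y))"
    using E1_above by (rule set_integrable_cong[THEN iffD1, rotated -1]) (auto simp: max_above)
  have "{0..} = {0..<c} \<union> {c..}" using c by auto
  thus int_max: "set_integrable lborel {0..} (\<lambda>y. max (E1 y) (E2 y))"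
    using set_integrable_Un[OF int_below int_above] by simp
  have "(LINT y:{0..}|lborel. max (E1 y) (E2 y))
        = (LINT y:{0..<c}|lborel. max (E1 y) (E2 y)) + (LINT y:{c..}|lborel. max (E1 y) (E2 y))"
    by (rule set_integral_split_at[OF c int_max])
  also have "(LINT y:{0..<c}|lborel. max (E1 y) (E2 y)) = (LINT y:{0..<c}|lborel. E2 y)"
    by (rule set_lebesgue_integral_cong) (auto simp: max_below)
  also have "(LINT y:{c..}|lborel. max (E1 y) (E2 y)) = (LINT y:{c..}|lborel. E1 y)"
    by (rule set_lebesgue_integral_cong) (auto simp: max_above)
  also have "(LINT y:{0..<c}|lborel. E2 y) = (LINT y:{0..}|lborel. E2 y) - (LINT y:{c..}|lborel. E2 y)"
    using set_integral_split_at[OF c E2] by simp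
  finally show "(LINT y:{0..}|lborel. max (E1 y) (E2 y))
           = (LINT y:{0..}|lborel. E2 y) - (LINT y:{c..}|lborel. E2 y) + (LINT y:{c..}|lborel. E1 y)" .
qed

lemma finite_pair_differences: "finite {(m::'i::finite \<Rightarrow> real) xi - \<nu> * m xj | xi xj. xi \<noteq> xj}"
proof -
  have "{m xi - \<nu> * m xj | xi xj. xi \<noteq> xj} = (\<lambda>(i,j). m i - \<nu> * m j) ` {(i,j). i \<noteq> j}" by auto
  thus ?thesis by simp
qed

lemma minpair_le: "i \<noteq> j \<Longrightarrow> minpair \<nu> (m::'i::finite \<Rightarrow> real) \<le> m i - \<nu> * m j"
  unfolding minpair_def by (rule Min_le[OF finite_pair_differences]) auto

context
  fixes \<nu> :: real
  assumes nu: "0 < \<nu>" "\<nu> < 1"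
begin

lemma exp_ln_div_one_minus: "exp (ln \<nu> / (1-\<nu>)) = \<nu> * \<nu> powr (\<nu>/(1-\<nu>))"
proof -
  have "ln \<nu> / (1-\<nu>) = ln \<nu> + \<nu>/(1-\<nu>) * ln \<nu>" using nu by (simp add: field_split_simps)
  thus ?thesis using nu by (simp add: powr_def exp_add)
qed

lemma hfun_eq: "hfun \<nu> = (1-\<nu>) * \<nu> powr (\<nu>/(1-\<nu>))"
  unfolding hfun_def exp_ln_div_one_minus using nu by (simp add: powr_def algebra_simps)

lemma hfun_pos: "0 < hfun \<nu>"
  unfolding hfun_eq using nu by simp

lemma gfun_pos: "0 < gfun \<nu>"
proof -
  have "ln \<nu> / (1-\<nu>) < 0" using nu by (simp add: divide_neg_pos)
  hence "0 < 1/(1+\<nu>) - ln \<nu>/(1-\<nu>)" using nu by (smt (verit) divide_pos_pos)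
  thus ?thesis unfolding gfun_def by simp
qed

lemma exp_crossing_value_eq:
  fixes p q :: real
  defines "ys \<equiv> (q - p - ln \<nu>)/(1-\<nu>)"
  shows "exp q - exp (q - max 0 ys) + exp (p - \<nu> * max 0 ys)
           = (if q - p < ln \<nu> then exp p else exp q + hfun \<nu> * exp ((p - \<nu>*q)/(1-\<nu>)))"
proof (cases "q - p < ln \<nu>")
  case True
  hence "ys < 0" unfolding ys_def using nu by (simp add: divide_neg_pos)
  thus ?thesis using True by simp
next
  case False
  hence "max 0 ys = ys" unfolding ys_def using nu by simp
  moreover have "q - ys = (p - \<nu>*q)/(1-\<nu>) + ln \<nu>/(1-\<nu>)"
    unfolding ys_def using nu by (simp add: add_divide_distrib[symmetric] diff_divide_eq_iff algebra_simps)
  hence "exp (q - ys) = exp ((p - \<nu>*q)/(1-\<nu>)) * exp (ln \<nu>/(1-\<nu>))" by (simp add: exp_add)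
  moreover have "p - \<nu>*ys = (p - \<nu>*q)/(1-\<nu>) + \<nu>/(1-\<nu>) * ln \<nu>"
    unfolding ys_def using nu by (simp add: add_divide_distrib[symmetric] diff_divide_eq_iff algebra_simps)
  hence "exp (p - \<nu>*ys) = exp ((p - \<nu>*q)/(1-\<nu>)) * exp (\<nu>/(1-\<nu>) * ln \<nu>)" by (simp add: exp_add)
  ultimately show ?thesis using False unfolding hfun_def by (simp add: algebra_simps)
qed

lemma set_integral_max_exp:
  shows "set_integrable lborel {0..} (\<lambda>y. max (exp (p + ln \<nu> - \<nu>*y)) (exp (q - y)))"
    and "(LINT y:{0..}|lborel. max (exp (p + ln \<nu> - \<nu>*y)) (exp (q - y))) =
           (if q - p < ln \<nu> then exp p else exp q + hfun \<nu> * exp ((p - \<nu>*q)/(1-\<nu>)))"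
proof -
  define E1 where "E1 y = exp (p + ln \<nu>) * exp (-\<nu>*y)" for y
  define E2 where "E2 y = exp q * exp (-1*y)" for y :: real
  have max_eq: "max (exp (p + ln \<nu> - \<nu>*y)) (exp (q - y)) = max (E1 y) (E2 y)" for y
    by (simp add: E1_def E2_def mult_exp_exp)
  have E1_int: "set_integrable lborel {c..} E1" and E2_int: "set_integrable lborel {c..} E2" for c
    unfolding E1_def[abs_def] E2_def[abs_def] by (rule set_integrable_exp_neg; use nu in simp)+
  have E1_val: "(LINT y:{c..}|lborel. E1 y) = exp (p - \<nu>*c)" for c
    unfolding E1_def set_integral_exp_neg[OF nu(1)] using nu
    by (simp add: exp_add exp_diff exp_minus field_simps)
  have E2_val: "(LINT y:{c..}|lborel. E2 y) = exp (q - c)" for c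
    unfolding E2_def set_integral_exp_neg[OF zero_less_one] by (simp add: exp_diff exp_minus field_simps)
  define ys where "ys = (q - p - ln \<nu>)/(1-\<nu>)"
  define c where "c = max 0 ys"
  have le_ys: "y \<le> ys \<longleftrightarrow> y * (1-\<nu>) \<le> q - p - ln \<nu>" and ys_le: "ys \<le> y \<longleftrightarrow> q - p - ln \<nu> \<le> y * (1-\<nu>)"
    for y unfolding ys_def using nu
    by (metis diff_gt_0_iff_gt pos_le_divide_eq, metis diff_gt_0_iff_gt pos_divide_le_eq)
  have below: "E1 y \<le> E2 y" if "0 \<le> y" "y < c" for y
    using that le_ys[of y] unfolding E1_def E2_def mult_exp_exp c_def
    by (simp add: less_max_iff_disj algebra_simps)
  have above: "E2 y \<le> E1 y" if "c \<le> y" for y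
    using that ys_le[of y] unfolding E1_def E2_def mult_exp_exp c_def by (simp add: algebra_simps)
  have "0 \<le> c" unfolding c_def by simp
  note crossing = set_integral_max_crossing[OF this below above E1_int E2_int]
  show "set_integrable lborel {0..} (\<lambda>y. max (exp (p + ln \<nu> - \<nu>*y)) (exp (q - y)))"
    unfolding max_eq by (rule crossing(1))
  have "(LINT y:{0..}|lborel. max (exp (p + ln \<nu> - \<nu>*y)) (exp (q - y)))
        = (LINT y:{0..}|lborel. E2 y) - (LINT y:{c..}|lborel. E2 y) + (LINT y:{c..}|lborel. E1 y)"
    unfolding max_eq by (rule crossing(2))
  also have "\<dots> = exp q - exp (q - c) + exp (p - \<nu>*c)"
    unfolding E1_val E2_val by simp
  also have "\<dots> = (if q - p < ln \<nu> then exp p else exp q + hfun \<nu> * exp ((p - \<nu>*q)/(1-\<nu>)))"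
    unfolding c_def ys_def by (rule exp_crossing_value_eq)
  finally show "(LINT y:{0..}|lborel. max (exp (p + ln \<nu> - \<nu>*y)) (exp (q - y))) =
           (if q - p < ln \<nu> then exp p else exp q + hfun \<nu> * exp ((p - \<nu>*q)/(1-\<nu>)))" .
qed

lemma Jfun_neg_iff: "Jfun \<nu> y < 0 \<longleftrightarrow> y < - ln \<nu> / (1-\<nu>)"
proof -
  have "Jfun \<nu> y < 0 \<longleftrightarrow> y * (1-\<nu>) < - ln \<nu>" unfolding Jfun_def by (simp add: algebra_simps)
  also have "\<dots> \<longleftrightarrow> y < - ln \<nu> / (1-\<nu>)" using nu by (metis diff_gt_0_iff_gt pos_less_divide_eq)
  finally show ?thesis .
qed

lemma exp_min_Jfun_below:
  assumes "y < - ln \<nu> / (1-\<nu>)"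
  shows "exp (min (Jfun \<nu> y) (-\<nu> * Jfun \<nu> y) / (1-\<nu>) - y) = exp (ln \<nu> / (1-\<nu>))"
proof -
  have "Jfun \<nu> y < 0" using assms Jfun_neg_iff by blast
  hence "min (Jfun \<nu> y) (-\<nu> * Jfun \<nu> y) = Jfun \<nu> y"
    using nu by (simp add: min_def mult_neg_neg) (smt (verit) mult_pos_neg)
  moreover have "Jfun \<nu> y / (1-\<nu>) - y = ln \<nu> / (1-\<nu>)"
    unfolding Jfun_def using nu by (simp add: field_split_simps)
  ultimately show ?thesis by simp
qed

lemma exp_min_Jfun_above:
  assumes "- ln \<nu> / (1-\<nu>) \<le> y"
  shows "exp (min (Jfun \<nu> y) (-\<nu> * Jfun \<nu> y) / (1-\<nu>) - y)
           = exp (-\<nu> * ln \<nu> / (1-\<nu>)) * exp (-(1+\<nu>)*y)"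
proof -
  have "0 \<le> Jfun \<nu> y" using assms Jfun_neg_iff by (meson not_less)
  hence "min (Jfun \<nu> y) (-\<nu> * Jfun \<nu> y) = -\<nu> * Jfun \<nu> y"
    using nu by (simp add: min_def) (smt (verit) mult_nonneg_nonneg)
  moreover have "-\<nu> * Jfun \<nu> y / (1-\<nu>) - y = -\<nu> * ln \<nu> / (1-\<nu>) + (-(1+\<nu>)*y)"
    unfolding Jfun_def using nu by (simp add: field_split_simps; simp add: algebra_simps)
  ultimately show ?thesis by (simp add: mult_exp_exp algebra_simps)
qed

lemma set_integral_exp_min_Jfun:
  shows "set_integrable lborel {0..} (\<lambda>y. exp (min (Jfun \<nu> y) (-\<nu> * Jfun \<nu> y) / (1-\<nu>) - y))"
    and "(LINT y:{0..}|lborel. exp (min (Jfun \<nu> y) (-\<nu> * Jfun \<nu> y) / (1-\<nu>) - y)) = gfun \<nu>"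
proof -
  define \<psi> where "\<psi> y = exp (min (Jfun \<nu> y) (-\<nu> * Jfun \<nu> y) / (1-\<nu>) - y)" for y
  define y0 where "y0 = - ln \<nu> / (1-\<nu>)"
  define c1 where "c1 = exp (ln \<nu> / (1-\<nu>))"
  define c2 where "c2 = exp (-\<nu> * ln \<nu> / (1-\<nu>))"
  have y0_pos: "0 < y0" unfolding y0_def using nu by (simp add: divide_neg_pos)
  have \<psi>_below: "\<psi> y = c1" if "y < y0" for y
    unfolding \<psi>_def c1_def by (rule exp_min_Jfun_below) (use that in \<open>simp add: y0_def\<close>)
  have \<psi>_above: "\<psi> y = c2 * exp (-(1+\<nu>)*y)" if "y0 \<le> y" for y
    unfolding \<psi>_def c2_def by (rule exp_min_Jfun_above) (use that in \<open>simp add: y0_def\<close>)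
  have int_below: "set_integrable lborel {0..<y0} \<psi>"
  proof -
    have "set_integrable lborel {0..<y0} (\<lambda>_. c1)"
      unfolding set_integrable_def by (rule integrable_indicator) (use y0_pos in auto)
    thus ?thesis
      by (rule set_integrable_cong[THEN iffD1, rotated -1])
        (auto simp: \<psi>_below)
  qed
  have int_above: "set_integrable lborel {y0..} \<psi>"
    by (rule set_integrable_cong[THEN iffD1, rotated -1, OF set_integrable_exp_neg[of "1+\<nu>" y0 c2]])
      (use nu in \<open>auto simp: \<psi>_above\<close>)
  have "{0..} = {0..<y0} \<union> {y0..}" using y0_pos by auto
  hence int_all: "set_integrable lborel {0..} \<psi>"
    using set_integrable_Un[OF int_below int_above] by simp
  thus "set_integrable lborel {0..} (\<lambda>y. exp (min (Jfun \<nu> y) (-\<nu> * Jfun \<nu> y) / (1-\<nu>) - y))"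
    unfolding \<psi>_def .
  have "(LINT y:{0..}|lborel. \<psi> y) = (LINT y:{0..<y0}|lborel. \<psi> y) + (LINT y:{y0..}|lborel. \<psi> y)"
    by (rule set_integral_split_at[OF less_imp_le[OF y0_pos] int_all])
  also have "(LINT y:{0..<y0}|lborel. \<psi> y) = (LINT y:{0..<y0}|lborel. c1)"
    by (rule set_lebesgue_integral_cong) (auto simp: \<psi>_below)
  also have "\<dots> = y0 * c1" using y0_pos by (subst set_integral_const) auto
  also have "(LINT y:{y0..}|lborel. \<psi> y) = (LINT y:{y0..}|lborel. c2 * exp (-(1+\<nu>)*y))"
    by (rule set_lebesgue_integral_cong) (auto simp: \<psi>_above)
  also have "\<dots> = c2 * exp (-(1+\<nu>)*y0) / (1+\<nu>)" by (rule set_integral_exp_neg) (use nu in simp)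
  also have "c2 * exp (-(1+\<nu>)*y0) = c1"
  proof -
    have "-\<nu> * ln \<nu> / (1-\<nu>) + (-(1+\<nu>)*y0) = ln \<nu> / (1-\<nu>)" unfolding y0_def using nu
      by (simp add: field_split_simps; simp add: algebra_simps)
    thus ?thesis unfolding c1_def c2_def by (metis exp_add)
  qed
  also have "y0 * c1 + c1 / (1+\<nu>) = gfun \<nu>"
    unfolding gfun_def c1_def y0_def by (simp add: algebra_simps)
  finally show "(LINT y:{0..}|lborel. exp (min (Jfun \<nu> y) (-\<nu> * Jfun \<nu> y) / (1-\<nu>) - y)) = gfun \<nu>"
    unfolding \<psi>_def .
qed

text \<open>Apply convexity of \<open>exp\<close> to both terms along \<open>d = s * (- ln \<nu>)\<close>: the left side lies
  below the chord between its values \<open>1 + hfun \<nu>\<close> at \<open>d = 0\<close> and \<open>1\<close> at \<open>d = - ln \<nu>\<close>.\<close>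

lemma exp_neg_add_hfun_le:
  assumes d: "0 \<le> d" "d \<le> - ln \<nu>"
  shows "exp (-d) + hfun \<nu> * exp (\<nu>*d/(1-\<nu>)) \<le> 1 + hfun \<nu>"
proof -
  define D where "D = - ln \<nu>"
  define P where "P = \<nu> powr (\<nu>/(1-\<nu>))"
  have D_pos: "0 < D" unfolding D_def using nu by simp
  define s where "s = d / D"
  have "d \<le> D" unfolding D_def using d by simp
  hence s: "0 \<le> s" "s \<le> 1" unfolding s_def using D_pos d(1) by auto
  have ds: "d = s * D" unfolding s_def using D_pos by simp
  have "exp ((1 - s) *\<^sub>R 0 + s *\<^sub>R (-D)) \<le> (1 - s) * exp 0 + s * exp (-D)"
    by (rule convex_onD[OF exp_convex]) (use s in auto)
  hence e1: "exp (-d) \<le> (1 - s) + s * \<nu>" unfolding ds D_def using nu by simp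
  have "exp ((1 - s) *\<^sub>R 0 + s *\<^sub>R (\<nu>*D/(1-\<nu>))) \<le> (1 - s) * exp 0 + s * exp (\<nu>*D/(1-\<nu>))"
    by (rule convex_onD[OF exp_convex]) (use s in auto)
  moreover have "exp (\<nu>*D/(1-\<nu>)) = 1 / P"
    unfolding P_def D_def using nu by (simp add: powr_def exp_minus[symmetric] field_simps exp_minus_inverse)
  ultimately have e2: "exp (\<nu>*d/(1-\<nu>)) \<le> (1 - s) + s / P" unfolding ds by (simp add: ac_simps)
  have "hfun \<nu> * exp (\<nu>*d/(1-\<nu>)) \<le> hfun \<nu> * ((1 - s) + s / P)"
    using e2 hfun_pos by simp
  also have "\<dots> = hfun \<nu> * (1 - s) + s * (1 - \<nu>)"
    unfolding hfun_eq P_def[symmetric] using nu by (simp add: P_def field_simps)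
  finally have "hfun \<nu> * exp (\<nu>*d/(1-\<nu>)) \<le> hfun \<nu> * (1 - s) + s * (1 - \<nu>)" .
  moreover have "hfun \<nu> * (1 - s) \<le> hfun \<nu>" using hfun_pos s by (simp add: mult_left_le)
  ultimately show ?thesis using e1 by (simp add: algebra_simps)
qed

text \<open>With \<open>u = exp d \<in> [1, 1/\<nu>]\<close> the left side is convex in \<open>u\<close> and thus below its chord,
  while the right side is above the tangent of \<open>exp\<close> at \<open>0\<close>; chord and tangent agree.\<close>

lemma one_add_hfun_le:
  assumes d: "0 \<le> d" "d \<le> - ln \<nu>"
  shows "1 + hfun \<nu> * exp (d/(1-\<nu>)) \<le> exp d + hfun \<nu> * exp (-\<nu>*d/(1-\<nu>))"
proof -
  define u where "u = exp d"
  define P where "P = \<nu> powr (\<nu>/(1-\<nu>))"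
  have P_pos: "0 < P" unfolding P_def using nu by simp
  have u1: "1 \<le> u" unfolding u_def using d by simp
  have u_le: "u \<le> 1/\<nu>" unfolding u_def using d nu
    by (metis exp_ln exp_minus exp_le_cancel_iff inverse_eq_divide ln_inverse)
  have "1 + (-\<nu>*d/(1-\<nu>)) \<le> exp (-\<nu>*d/(1-\<nu>))" by (rule exp_ge_add_one_self)
  moreover have "d \<le> u - 1" unfolding u_def using exp_ge_add_one_self[of d] by linarith
  hence "\<nu>*d/(1-\<nu>) \<le> \<nu>*(u-1)/(1-\<nu>)" using nu by (intro divide_right_mono mult_left_mono) auto
  ultimately have tangent: "1 - \<nu>*(u-1)/(1-\<nu>) \<le> exp (-\<nu>*d/(1-\<nu>))" by simp
  define s where "s = (u - 1) * \<nu> / (1 - \<nu>)"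
  have s: "0 \<le> s" "s \<le> 1" unfolding s_def using u1 u_le nu by (auto simp: field_simps)
  have "s * ((1-\<nu>)/\<nu>) = u - 1" unfolding s_def using nu by (simp add: field_simps)
  moreover have "s * (1/\<nu>) - s = s * ((1-\<nu>)/\<nu>)" using nu by (simp add: field_simps)
  ultimately have us: "u = (1 - s) * 1 + s * (1/\<nu>)" by simp
  have "((1 - s) *\<^sub>R 1 + s *\<^sub>R (1/\<nu>)) powr (1/(1-\<nu>))
        \<le> (1 - s) * 1 powr (1/(1-\<nu>)) + s * (1/\<nu>) powr (1/(1-\<nu>))"
    by (rule convex_onD[OF powr_convex]) (use s nu in auto)
  moreover have "(1/\<nu>) powr (1/(1-\<nu>)) = 1 / (\<nu> * P)"
    unfolding P_def exp_ln_div_one_minus[symmetric] using nu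
    by (simp add: powr_def ln_div ln_inverse exp_minus[symmetric] divide_inverse)
  moreover have "exp (d/(1-\<nu>)) = u powr (1/(1-\<nu>))" unfolding u_def powr_def by simp
  ultimately have chord: "exp (d/(1-\<nu>)) \<le> (1 - s) + s / (\<nu> * P)" using us by simp
  have "hfun \<nu> * exp (d/(1-\<nu>)) \<le> hfun \<nu> * ((1 - s) + s / (\<nu> * P))"
    using chord hfun_pos by simp
  also have "\<dots> = hfun \<nu> * (1 - s) + hfun \<nu> * (s / (\<nu> * P))" by (simp add: algebra_simps)
  also have "hfun \<nu> * (s / (\<nu> * P)) = u - 1"
    unfolding hfun_eq P_def[symmetric] s_def using nu P_pos by (simp add: field_simps)
  also have "hfun \<nu> * (1 - s) \<le> hfun \<nu> * exp (-\<nu>*d/(1-\<nu>))"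
    using tangent hfun_pos unfolding s_def by (simp add: mult.commute)
  finally show ?thesis unfolding u_def by simp
qed

lemma xi_eq_if_not_argmax:
  assumes "b \<noteq> x1" "\<forall>y. (m::'i::finite \<Rightarrow> real) y \<le> m x1"
  shows "xi \<nu> b m = exp (m x1) + hfun \<nu> * exp ((m b - \<nu> * m x1)/(1-\<nu>))"
proof -
  have "ln \<nu> \<le> m x1 - m b" using assms(2) nu by (smt (verit) ln_less_zero)
  thus ?thesis unfolding xi_def Mmax_eq_if_argmax[OF assms] by simp
qed

lemma exp_add_hfun_le_top:
  assumes "q \<le> p" "p - q \<le> - ln \<nu>"
  shows "exp q + hfun \<nu> * exp ((p - \<nu>*q)/(1-\<nu>)) \<le> (1 + hfun \<nu>) * exp p"
proof -
  have "exp p * exp (-(p-q)) = exp q" by (simp add: mult_exp_exp)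
  moreover have "p + \<nu>*(p-q)/(1-\<nu>) = (p - \<nu>*q)/(1-\<nu>)"
    using nu by (simp add: add_divide_eq_iff algebra_simps)
  hence "exp p * exp (\<nu>*(p-q)/(1-\<nu>)) = exp ((p - \<nu>*q)/(1-\<nu>))" by (simp add: mult_exp_exp)
  ultimately have "exp q + hfun \<nu> * exp ((p - \<nu>*q)/(1-\<nu>))
                   = exp p * (exp (-(p-q)) + hfun \<nu> * exp (\<nu>*(p-q)/(1-\<nu>)))"
    by (simp add: algebra_simps)
  also have "\<dots> \<le> exp p * (1 + hfun \<nu>)"
    using assms by (intro mult_left_mono exp_neg_add_hfun_le) auto
  finally show ?thesis by (simp add: mult.commute)
qed

lemma exp_add_hfun_le_swap:
  assumes "q \<le> p" "p - q \<le> - ln \<nu>"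
  shows "exp q + hfun \<nu> * exp ((p - \<nu>*q)/(1-\<nu>)) \<le> exp p + hfun \<nu> * exp ((q - \<nu>*p)/(1-\<nu>))"
proof -
  have "exp q * exp (p-q) = exp p" by (simp add: mult_exp_exp)
  moreover have "q + (p-q)/(1-\<nu>) = (p - \<nu>*q)/(1-\<nu>)" "q + -\<nu>*(p-q)/(1-\<nu>) = (q - \<nu>*p)/(1-\<nu>)"
    using nu by (simp_all add: add_divide_eq_iff algebra_simps)
  hence "exp q * exp ((p-q)/(1-\<nu>)) = exp ((p - \<nu>*q)/(1-\<nu>))"
    "exp q * exp (-\<nu>*(p-q)/(1-\<nu>)) = exp ((q - \<nu>*p)/(1-\<nu>))"
    by (simp_all add: mult_exp_exp)
  ultimately have "exp q * (1 + hfun \<nu> * exp ((p-q)/(1-\<nu>))) = exp q + hfun \<nu> * exp ((p - \<nu>*q)/(1-\<nu>))"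
    and "exp q * (exp (p-q) + hfun \<nu> * exp (-\<nu>*(p-q)/(1-\<nu>)))
         = exp p + hfun \<nu> * exp ((q - \<nu>*p)/(1-\<nu>))"
    by (simp_all add: algebra_simps)
  moreover have "exp q * (1 + hfun \<nu> * exp ((p-q)/(1-\<nu>)))
                 \<le> exp q * (exp (p-q) + hfun \<nu> * exp (-\<nu>*(p-q)/(1-\<nu>)))"
    using assms by (intro mult_left_mono one_add_hfun_le) auto
  ultimately show ?thesis by simp
qed

lemma xi_le_exp_Max:
  assumes card: "CARD('i::finite) \<ge> 2"
  shows "xi \<nu> a (m::'i \<Rightarrow> real) \<le> (1 + hfun \<nu>) * exp (Max (range m))"
proof -
  define M where "M = Max (range m)"
  define q where "q = Mmax m a"
  have qM: "q \<le> M" unfolding q_def M_def by (rule Mmax_le_Max[OF card])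
  have aM: "m a \<le> M" unfolding M_def by (rule Max_range_ge)
  have xi_far: "xi \<nu> a m = exp (m a)" if "q - m a < ln \<nu>"
    using that unfolding xi_def q_def by simp
  have xi_near: "xi \<nu> a m = exp q + hfun \<nu> * exp ((m a - \<nu>*q)/(1-\<nu>))" if "ln \<nu> \<le> q - m a"
    using that unfolding xi_def q_def by simp
  consider "q - m a < ln \<nu>" | "m a \<le> q" | "q < m a" "ln \<nu> \<le> q - m a" by linarith
  thus ?thesis
  proof cases
    case 1
    have "xi \<nu> a m = exp (m a)" by (rule xi_far[OF 1])
    also have "\<dots> \<le> exp M" using aM by simp
    also have "\<dots> \<le> (1 + hfun \<nu>) * exp M" using hfun_pos by simp
    finally show ?thesis unfolding M_def .
  next
    case 2
    have "ln \<nu> < 0" using nu by simp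
    hence xi_eq: "xi \<nu> a m = exp q + hfun \<nu> * exp ((m a - \<nu>*q)/(1-\<nu>))" using 2 by (intro xi_near) simp
    have "m a - \<nu>*q \<le> (1-\<nu>)*q" using 2 by (simp add: algebra_simps)
    hence "(m a - \<nu>*q)/(1-\<nu>) \<le> q" using nu by (simp add: divide_simps mult.commute)
    hence "hfun \<nu> * exp ((m a - \<nu>*q)/(1-\<nu>)) \<le> hfun \<nu> * exp M" using qM hfun_pos by simp
    moreover have "exp q \<le> exp M" using qM by simp
    ultimately show ?thesis unfolding xi_eq M_def[symmetric] distrib_right mult_1 by linarith
  next
    case 3
    have "xi \<nu> a m \<le> (1 + hfun \<nu>) * exp (m a)"
      unfolding xi_near[OF 3(2)] using 3 by (intro exp_add_hfun_le_top) auto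
    also have "\<dots> \<le> (1 + hfun \<nu>) * exp M" using aM hfun_pos by simp
    finally show ?thesis unfolding M_def .
  qed
qed

lemma xi_le_xi_second:
  assumes x12: "x1 \<noteq> x2" and x1: "\<forall>y. (m::'i::finite \<Rightarrow> real) y \<le> m x1"
    and x2: "\<forall>y. y \<noteq> x1 \<longrightarrow> m y \<le> m x2"
  shows "xi \<nu> a m \<le> xi \<nu> x2 m"
proof (cases "a = x1")
  case False
  have "(m a - \<nu> * m x1)/(1-\<nu>) \<le> (m x2 - \<nu> * m x1)/(1-\<nu>)"
    using x2 False nu by (simp add: divide_right_mono)
  thus ?thesis using hfun_pos
    unfolding xi_eq_if_not_argmax[OF False x1] xi_eq_if_not_argmax[OF x12[symmetric] x1] by simp
next
  case True
  have M1: "Mmax m x1 = m x2" unfolding Mmax_def by (rule Max_eqI) (use x2 x12 in auto)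
  show ?thesis
  proof (cases "m x2 - m x1 < ln \<nu>")
    case True
    hence "xi \<nu> a m = exp (m x1)" unfolding \<open>a = x1\<close> xi_def M1 by simp
    thus ?thesis unfolding xi_eq_if_not_argmax[OF x12[symmetric] x1] using hfun_pos by simp
  next
    case False
    hence "xi \<nu> a m = exp (m x2) + hfun \<nu> * exp ((m x1 - \<nu> * m x2)/(1-\<nu>))"
      unfolding \<open>a = x1\<close> xi_def M1 by simp
    also have "\<dots> \<le> exp (m x1) + hfun \<nu> * exp ((m x2 - \<nu> * m x1)/(1-\<nu>))"
      by (rule exp_add_hfun_le_swap) (use False x1 in auto)
    finally show ?thesis unfolding xi_eq_if_not_argmax[OF x12[symmetric] x1] .
  qed
qed

lemma xi_ge_if_not_argmax:
  assumes "b \<noteq> x1" "\<forall>y. (m::'i::finite \<Rightarrow> real) y \<le> m x1"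
  shows "exp (m x1) + hfun \<nu> * exp (minpair \<nu> m / (1-\<nu>)) \<le> xi \<nu> b m"
proof -
  have "minpair \<nu> m / (1-\<nu>) \<le> (m b - \<nu> * m x1)/(1-\<nu>)"
    using minpair_le[OF assms(1)] nu by (simp add: divide_right_mono)
  thus ?thesis unfolding xi_eq_if_not_argmax[OF assms] using hfun_pos by simp
qed

text \<open>Shifting one coordinate by \<open>t\<close> moves each pair difference \<open>m xi - \<nu> * m xj\<close>
  by \<open>t\<close>, by \<open>-\<nu> * t\<close> or not at all.\<close>

lemma minpair_shift_ge:
  assumes "CARD('i::finite) \<ge> 2"
  shows "minpair \<nu> m + min t (-\<nu>*t) \<le> minpair \<nu> (shift (m::'i \<Rightarrow> real) a t)"
  unfolding minpair_def[of _ "shift m a t"]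
proof (rule Min.boundedI[OF finite_pair_differences])
  obtain b where "b \<noteq> a" using exists_ne_if_card_ge_2[OF assms] by blast
  thus "{shift m a t xi - \<nu> * shift m a t xj |xi xj. xi \<noteq> xj} \<noteq> {}" by blast
  fix x assume "x \<in> {shift m a t xi - \<nu> * shift m a t xj |xi xj. xi \<noteq> xj}"
  then obtain i j where ij: "i \<noteq> j" "x = shift m a t i - \<nu> * shift m a t j" by blast
  have min_le: "min t (-\<nu>*t) \<le> 0" "min t (-\<nu>*t) \<le> t" "min t (-\<nu>*t) \<le> -\<nu>*t"
    using nu by (auto simp: min_le_iff_disj not_le intro: mult_nonneg_nonneg)
  have "x \<ge> m i - \<nu> * m j + min t (-\<nu>*t)"
  proof (cases "i = a")
    case True
    thus ?thesis using ij min_le by simp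
  next
    case False
    thus ?thesis using ij min_le by (cases "j = a") (simp_all add: algebra_simps)
  qed
  thus "minpair \<nu> m + min t (-\<nu>*t) \<le> x" using minpair_le[OF ij(1), of \<nu> m] by simp
qed

end

lemma continuous_on_Max_image:
  fixes f :: "'a::topological_space \<Rightarrow> 'b \<Rightarrow> real"
  assumes "finite I" "I \<noteq> {}" "\<And>i. i \<in> I \<Longrightarrow> continuous_on S (\<lambda>x. f x i)"
  shows "continuous_on S (\<lambda>x. Max (f x ` I))"
  using assms
proof (induction I rule: finite_ne_induct)
  case (insert i I)
  hence "continuous_on S (\<lambda>x. max (f x i) (Max (f x ` I)))" by (intro continuous_on_max) auto
  thus ?case using insert by (simp add: Max_insert)
qed simp

lemma continuous_on_Max_range:
  fixes f :: "'a::topological_space \<Rightarrow> 'i::finite \<Rightarrow> real"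
  shows "(\<And>i. continuous_on S (\<lambda>x. f x i)) \<Longrightarrow> continuous_on S (\<lambda>x. Max (range (f x)))"
  by (rule continuous_on_Max_image) auto

definition Qrem :: "real \<Rightarrow> nat \<Rightarrow> ('i::finite \<Rightarrow> real) \<Rightarrow> 'i \<Rightarrow> real" where
  "Qrem \<nu> n m a = (LINT y:{0..}|lborel. Wrem \<nu> n (shift m a (Jfun \<nu> y)) * fdens \<nu> m a y)"

lemma Wrem_Suc_eq_Max_Qrem: "Wrem \<nu> (Suc n) m = Max (range (Qrem \<nu> n (m::'i::finite \<Rightarrow> real)))"
  by (simp add: Qrem_def shift_def)

lemma qfun_eq_Qrem: "k < L \<Longrightarrow> qfun \<nu> L k m a = Qrem \<nu> (L - k - 1) (m::'i::finite \<Rightarrow> real) a"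
  unfolding qfun_def Qrem_def Vstar_def shift_def by (simp add: diff_diff_add)

lemma Vstar_eq_Max_Qrem:
  "k < L \<Longrightarrow> Vstar \<nu> L k m = Max (range (Qrem \<nu> (L - k - 1) (m::'i::finite \<Rightarrow> real)))"
  unfolding Vstar_def by (metis Suc_diff_Suc Wrem_Suc_eq_Max_Qrem diff_diff_add add.commute plus_1_eq_Suc)

lemma Wrem_nonneg: "0 < \<nu> \<Longrightarrow> 0 \<le> Wrem \<nu> n (m::'i::finite \<Rightarrow> real)"
proof (induction n arbitrary: m)
  case 0
  show ?case unfolding Wrem.simps by (rule order_trans[OF less_imp_le[OF pa_pos] Max_range_ge])
next
  case (Suc n)
  have "0 \<le> Qrem \<nu> n m a" for a
    unfolding Qrem_def using Suc by (intro set_integral_nonneg mult_nonneg_nonneg fdens_nonneg) auto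
  thus ?case unfolding Wrem_Suc_eq_Max_Qrem by (simp add: Max_ge_iff)
qed

lemma Wrem_le_1: "0 < \<nu> \<Longrightarrow> Wrem \<nu> n (m::'i::finite \<Rightarrow> real) \<le> 1"
proof (induction n arbitrary: m)
  case 0
  show ?case by (simp add: Max_range_le pa_le_1)
next
  case (Suc n)
  have "Qrem \<nu> n m a \<le> 1" for a
  proof -
    have "Qrem \<nu> n m a \<le> (LINT y:{0..}|lborel. fdens \<nu> m a y)"
      unfolding Qrem_def using Suc fdens_nonneg[OF Suc.prems]
      by (intro set_integral_mono_nonneg set_integrable_fdens) (auto intro: mult_left_le_one_le Wrem_nonneg)
    also have "\<dots> = 1" by (rule set_integral_fdens[OF Suc.prems])
    finally show ?thesis .
  qed
  thus ?case unfolding Wrem_Suc_eq_Max_Qrem by (rule Max_range_le)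
qed

lemma continuous_on_shift_Jfun: "continuous_on UNIV (\<lambda>y. shift m a (Jfun \<nu> y))"
  unfolding shift_def Jfun_def by (intro continuous_on_coordinatewise_then_product continuous_intros)

lemma borel_measurable_belief_integrand:
  assumes "continuous_on UNIV (F :: ('i::finite \<Rightarrow> real) \<Rightarrow> real)"
  shows "(\<lambda>y. indicator {0..} y *\<^sub>R (F (shift m a (Jfun \<nu> y)) * fdens \<nu> m a y)) \<in> borel_measurable lborel"
proof -
  have [measurable]: "(\<lambda>y. F (shift m a (Jfun \<nu> y))) \<in> borel_measurable borel"
    by (rule borel_measurable_continuous_onI, rule continuous_on_compose2[OF assms continuous_on_shift_Jfun]) auto
  show ?thesis unfolding fdens_def by measurable
qed

lemma belief_integrand_bound:
  assumes "0 < \<nu>" "0 \<le> F (shift m a (Jfun \<nu> y))" "F (shift m a (Jfun \<nu> y)) \<le> 1"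
  shows "norm (indicator {0..} y *\<^sub>R (F (shift m a (Jfun \<nu> y)) * fdens \<nu> m a y))
         \<le> indicator {0..} y *\<^sub>R (\<nu> * exp (-\<nu>*y) + exp (-y))"
proof -
  have "F (shift m a (Jfun \<nu> y)) * fdens \<nu> m a y \<le> 1 * (\<nu> * exp (-\<nu>*y) + exp (-y))"
    using assms fdens_nonneg[OF assms(1)] fdens_le[OF assms(1)] by (intro mult_mono) auto
  thus ?thesis using assms fdens_nonneg[OF assms(1), of m a y] by (simp split: split_indicator)
qed

lemma
  fixes F :: "('i::finite \<Rightarrow> real) \<Rightarrow> real"
  assumes nu: "0 < \<nu>" and F: "continuous_on UNIV F" "\<And>m. 0 \<le> F m" "\<And>m. F m \<le> 1"
  shows set_integrable_belief_integral:
      "set_integrable lborel {0..} (\<lambda>y. F (shift m a (Jfun \<nu> y)) * fdens \<nu> m a y)"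
    and continuous_on_belief_integral:
      "continuous_on UNIV (\<lambda>m. LINT y:{0..}|lborel. F (shift m a (Jfun \<nu> y)) * fdens \<nu> m a y)"
proof -
  define w where "w y = indicator {0..} y *\<^sub>R (\<nu> * exp (-\<nu>*y) + exp (-y))" for y :: real
  have w: "integrable lborel w"
    using set_integrable_fdens_bound[OF nu] unfolding set_integrable_def w_def .
  have bound: "norm (indicator {0..} y *\<^sub>R (F (shift m a (Jfun \<nu> y)) * fdens \<nu> m a y)) \<le> w y" for m y
    unfolding w_def using F by (intro belief_integrand_bound[OF nu]) auto
  have AE_bound: "AE y in lborel. norm (indicator {0..} y *\<^sub>R (F (shift m a (Jfun \<nu> y)) * fdens \<nu> m a y))
                    \<le> norm (w y)" for m
    by (rule AE_I2) (use bound[where m=m] in \<open>auto intro: order_trans abs_ge_self\<close>)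
  show "set_integrable lborel {0..} (\<lambda>y. F (shift m a (Jfun \<nu> y)) * fdens \<nu> m a y)"
    unfolding set_integrable_def
    by (rule Bochner_Integration.integrable_bound[OF w borel_measurable_belief_integrand[OF F(1)] AE_bound])
  show "continuous_on UNIV (\<lambda>m. LINT y:{0..}|lborel. F (shift m a (Jfun \<nu> y)) * fdens \<nu> m a y)"
    unfolding continuous_on_sequentially set_lebesgue_integral_def comp_def
  proof (intro allI ballI impI)
    fix s :: "nat \<Rightarrow> 'i \<Rightarrow> real" and m assume "(\<forall>n. s n \<in> UNIV) \<and> s \<longlonglongrightarrow> m"
    hence s: "s \<longlonglongrightarrow> m" by blast
    have "(\<lambda>j. F (shift (s j) a (Jfun \<nu> y)) * fdens \<nu> (s j) a y)
          \<longlonglongrightarrow> F (shift m a (Jfun \<nu> y)) * fdens \<nu> m a y" for y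
    proof (intro tendsto_mult continuous_on_tendsto_compose[OF continuous_on_fdens s])
      have "continuous_on UNIV (\<lambda>m. F (shift m a (Jfun \<nu> y)))"
        using F(1) unfolding shift_def
        by (intro continuous_on_compose2[OF F(1)] continuous_on_coordinatewise_then_product
            continuous_intros) auto
      thus "(\<lambda>j. F (shift (s j) a (Jfun \<nu> y))) \<longlonglongrightarrow> F (shift m a (Jfun \<nu> y))"
        by (rule continuous_on_tendsto_compose[OF _ s]) auto
    qed auto
    thus "(\<lambda>j. LINT y|lborel. indicator {0..} y *\<^sub>R (F (shift (s j) a (Jfun \<nu> y)) * fdens \<nu> (s j) a y))
          \<longlonglongrightarrow> (LINT y|lborel. indicator {0..} y *\<^sub>R (F (shift m a (Jfun \<nu> y)) * fdens \<nu> m a y))"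
      by (intro integral_dominated_convergence[where w=w] borel_measurable_belief_integrand[OF F(1)] w
          AE_I2 bound tendsto_scaleR tendsto_const)
  qed
qed

lemma continuous_on_Wrem:
  assumes "0 < \<nu>" shows "continuous_on UNIV (Wrem \<nu> n :: ('i::finite \<Rightarrow> real) \<Rightarrow> real)"
proof (induction n)
  case 0
  show ?case unfolding Wrem.simps pa_def
    by (intro continuous_on_Max_range continuous_intros continuous_on_Zsum) (simp_all add: Zsum_neq_0)
next
  case (Suc n)
  show ?case unfolding Wrem_Suc_eq_Max_Qrem Qrem_def
    using Suc Wrem_nonneg[OF assms] Wrem_le_1[OF assms]
    by (intro continuous_on_Max_range continuous_on_belief_integral[OF assms]) auto
qed

lemma set_integrable_Qrem_integrand:
  "0 < \<nu> \<Longrightarrow> set_integrable lborel {0..} (\<lambda>y. Wrem \<nu> n (shift (m::'i::finite \<Rightarrow> real) a (Jfun \<nu> y)) * fdens \<nu> m a y)"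
  by (intro set_integrable_belief_integral continuous_on_Wrem Wrem_nonneg Wrem_le_1)

context
  fixes \<nu> :: real
  assumes card: "CARD('i::finite) \<ge> 2" and nu: "0 < \<nu>" "\<nu> < 1"
begin

lemma Wrem_0_shift_mul_fdens:
  "Wrem \<nu> 0 (shift (m::'i \<Rightarrow> real) a (Jfun \<nu> y)) * fdens \<nu> m a y
     = max (exp (m a + ln \<nu> - \<nu>*y)) (exp (Mmax m a - y)) / Zsum m"
proof -
  have "exp (max (m a + Jfun \<nu> y) (Mmax m a)) * exp (-y)
        = max (exp (m a + ln \<nu> - \<nu>*y)) (exp (Mmax m a - y))"
    unfolding mult_exp_exp Jfun_def by (simp add: max_def algebra_simps)
  thus ?thesis unfolding Wrem_0_eq fdens_eq_Zsum_shift[OF nu(1)] Max_range_shift[OF card]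
    using Zsum_pos[of m] Zsum_pos[of "shift m a (Jfun \<nu> y)"] by (simp add: field_simps)
qed

lemma Qrem_0: "Qrem \<nu> 0 (m::'i \<Rightarrow> real) a = xi \<nu> a m / Zsum m"
  unfolding Qrem_def Wrem_0_shift_mul_fdens set_integral_divide_zero
    set_integral_max_exp(2)[OF nu] xi_def by simp

lemma Qrem_le_of_Wrem_le:
  assumes W: "\<And>m'::'i \<Rightarrow> real. Wrem \<nu> n m' \<le> C * Wrem \<nu> 0 m'" and C: "0 \<le> C"
  shows "Qrem \<nu> n (m::'i \<Rightarrow> real) a \<le> C * xi \<nu> a m / Zsum m"
proof -
  have "Qrem \<nu> n m a \<le> (LINT y:{0..}|lborel. C * (Wrem \<nu> 0 (shift m a (Jfun \<nu> y)) * fdens \<nu> m a y))"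
    unfolding Qrem_def
  proof (rule set_integral_mono)
    show "Wrem \<nu> n (shift m a (Jfun \<nu> y)) * fdens \<nu> m a y
          \<le> C * (Wrem \<nu> 0 (shift m a (Jfun \<nu> y)) * fdens \<nu> m a y)" for y
      using mult_right_mono[OF W fdens_nonneg[OF nu(1)]] by (simp add: mult.assoc)
  qed (intro set_integrable_mult_right set_integrable_Qrem_integrand nu)+
  also have "\<dots> = C * xi \<nu> a m / Zsum m" using Qrem_0 unfolding Qrem_def by simp
  finally show ?thesis .
qed

lemma Wrem_le_pow_mul_Wrem_0: "Wrem \<nu> n (m::'i \<Rightarrow> real) \<le> (1 + hfun \<nu>)^n * Wrem \<nu> 0 m"
proof (induction n arbitrary: m)
  case (Suc n)
  have C: "0 \<le> (1 + hfun \<nu>)^n" using hfun_pos[OF nu] by simp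
  show ?case unfolding Wrem_Suc_eq_Max_Qrem
  proof (rule Max_range_le)
    fix a
    have "Qrem \<nu> n m a \<le> (1 + hfun \<nu>)^n * xi \<nu> a m / Zsum m" by (rule Qrem_le_of_Wrem_le[OF Suc.IH C])
    also have "\<dots> \<le> (1 + hfun \<nu>)^n * ((1 + hfun \<nu>) * exp (Max (range m))) / Zsum m"
      using xi_le_exp_Max[OF nu card, of a m] C Zsum_pos[of m]
      by (intro divide_right_mono mult_left_mono) auto
    also have "\<dots> = (1 + hfun \<nu>) ^ Suc n * Wrem \<nu> 0 m" unfolding Wrem_0_eq by simp
    finally show "Qrem \<nu> n m a \<le> (1 + hfun \<nu>) ^ Suc n * Wrem \<nu> 0 m" .
  qed
qed simp

lemma Qrem_le: "Qrem \<nu> n (m::'i \<Rightarrow> real) a \<le> (1 + hfun \<nu>)^n * xi \<nu> a m / Zsum m"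
  using hfun_pos[OF nu] by (intro Qrem_le_of_Wrem_le Wrem_le_pow_mul_Wrem_0) simp

lemma exp_minpair_shift_ge:
  "exp (minpair \<nu> m / (1-\<nu>)) * exp (min t (-\<nu>*t) / (1-\<nu>))
     \<le> exp (minpair \<nu> (shift (m::'i \<Rightarrow> real) a t) / (1-\<nu>))"
  unfolding mult_exp_exp add_divide_distrib[symmetric] exp_le_cancel_iff
  using minpair_shift_ge[OF nu card] nu by (intro divide_right_mono) auto

lemma Wrem_Suc_ge_of_Qrem_ge:
  assumes LB: "\<And>(m::'i \<Rightarrow> real) a.
    (xi \<nu> a m + exp (minpair \<nu> m / (1-\<nu>)) * hfun \<nu> * S) / Zsum m \<le> Qrem \<nu> n m a"
  shows "(exp (Max (range m)) + exp (minpair \<nu> m / (1-\<nu>)) * hfun \<nu> * (1 + S)) / Zsum m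
           \<le> Wrem \<nu> (Suc n) (m::'i \<Rightarrow> real)"
proof -
  obtain x1 where x1: "\<forall>b. m b \<le> m x1" using ex_argmax by blast
  obtain b where b: "b \<noteq> x1" using exists_ne_if_card_ge_2[OF card] by blast
  have "exp (Max (range m)) + exp (minpair \<nu> m / (1-\<nu>)) * hfun \<nu> * (1 + S)
        \<le> xi \<nu> b m + exp (minpair \<nu> m / (1-\<nu>)) * hfun \<nu> * S"
    using xi_ge_if_not_argmax[OF nu b x1] Max_range_eqI[of m x1] x1 by (simp add: algebra_simps)
  hence "(exp (Max (range m)) + exp (minpair \<nu> m / (1-\<nu>)) * hfun \<nu> * (1 + S)) / Zsum m
         \<le> (xi \<nu> b m + exp (minpair \<nu> m / (1-\<nu>)) * hfun \<nu> * S) / Zsum m"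
    using Zsum_pos[of m] by (simp add: divide_right_mono)
  also have "\<dots> \<le> Qrem \<nu> n m b" by (rule LB)
  also have "\<dots> \<le> Wrem \<nu> (Suc n) m" unfolding Wrem_Suc_eq_Max_Qrem by (rule Max_range_ge)
  finally show ?thesis .
qed

text \<open>The gain \<open>K * exp (minpair \<nu> m / (1-\<nu>))\<close> collected one slot later survives the
  observation up to the factor \<open>exp (min J (-\<nu> J) / (1-\<nu>))\<close>, whose integral against
  \<open>exp (-y)\<close> is \<open>gfun \<nu>\<close>.\<close>

lemma Qrem_Suc_integrand_ge:
  assumes W: "\<And>m'::'i \<Rightarrow> real. Wrem \<nu> 0 m' + K * exp (minpair \<nu> m' / (1-\<nu>)) / Zsum m' \<le> Wrem \<nu> (Suc n) m'"
    and K: "0 \<le> K"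
  shows "Wrem \<nu> 0 (shift m a (Jfun \<nu> y)) * fdens \<nu> m a y
         + K * exp (minpair \<nu> m / (1-\<nu>)) / Zsum m
           * exp (min (Jfun \<nu> y) (-\<nu> * Jfun \<nu> y) / (1-\<nu>) - y)
         \<le> Wrem \<nu> (Suc n) (shift (m::'i \<Rightarrow> real) a (Jfun \<nu> y)) * fdens \<nu> m a y"
proof -
  define m' where "m' = shift m a (Jfun \<nu> y)"
  have f: "fdens \<nu> m a y = Zsum m' * exp (-y) / Zsum m"
    unfolding m'_def by (rule fdens_eq_Zsum_shift[OF nu(1)])
  have "K * exp (minpair \<nu> m / (1-\<nu>)) / Zsum m * exp (min (Jfun \<nu> y) (-\<nu> * Jfun \<nu> y) / (1-\<nu>) - y)
        = K * (exp (minpair \<nu> m / (1-\<nu>)) * exp (min (Jfun \<nu> y) (-\<nu> * Jfun \<nu> y) / (1-\<nu>)))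
            * exp (-y) / Zsum m"
    by (simp add: exp_diff exp_minus field_simps)
  also have "\<dots> \<le> K * exp (minpair \<nu> m' / (1-\<nu>)) * exp (-y) / Zsum m"
    unfolding m'_def using exp_minpair_shift_ge K Zsum_pos[of m]
    by (intro divide_right_mono mult_right_mono mult_left_mono) auto
  also have "\<dots> = K * exp (minpair \<nu> m' / (1-\<nu>)) / Zsum m' * fdens \<nu> m a y"
    unfolding f using Zsum_pos[of m'] by simp
  finally have "Wrem \<nu> 0 m' * fdens \<nu> m a y
         + K * exp (minpair \<nu> m / (1-\<nu>)) / Zsum m
           * exp (min (Jfun \<nu> y) (-\<nu> * Jfun \<nu> y) / (1-\<nu>) - y)
      \<le> (Wrem \<nu> 0 m' + K * exp (minpair \<nu> m' / (1-\<nu>)) / Zsum m') * fdens \<nu> m a y"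
    by (simp add: algebra_simps)
  also have "\<dots> \<le> Wrem \<nu> (Suc n) m' * fdens \<nu> m a y"
    by (rule mult_right_mono[OF W fdens_nonneg[OF nu(1)]])
  finally show ?thesis unfolding m'_def .
qed

lemma Qrem_ge:
  "(xi \<nu> a m + exp (minpair \<nu> m / (1-\<nu>)) * hfun \<nu> * (\<Sum>j\<in>{1..n}. gfun \<nu> ^ j)) / Zsum m
     \<le> Qrem \<nu> n (m::'i \<Rightarrow> real) a"
proof (induction n arbitrary: m a)
  case 0
  show ?case by (simp add: Qrem_0)
next
  case (Suc n)
  define S where "S = (\<Sum>j\<in>{1..n}. gfun \<nu> ^ j)"
  define K where "K = hfun \<nu> * (1 + S)"
  define \<psi> where "\<psi> y = exp (min (Jfun \<nu> y) (-\<nu> * Jfun \<nu> y) / (1-\<nu>) - y)" for y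
  have K: "0 \<le> K" unfolding K_def S_def using hfun_pos[OF nu] gfun_pos[OF nu]
    by (intro mult_nonneg_nonneg add_nonneg_nonneg sum_nonneg) auto
  have W: "Wrem \<nu> 0 m' + K * exp (minpair \<nu> m' / (1-\<nu>)) / Zsum m' \<le> Wrem \<nu> (Suc n) m'"
    for m' :: "'i \<Rightarrow> real"
    using Wrem_Suc_ge_of_Qrem_ge[OF Suc.IH[folded S_def], of m']
    unfolding Wrem_0_eq K_def by (simp add: add_divide_distrib algebra_simps)
  have int_\<psi>: "set_integrable lborel {0..} (\<lambda>y. K * exp (minpair \<nu> m / (1-\<nu>)) / Zsum m * \<psi> y)"
    unfolding \<psi>_def by (intro set_integrable_mult_right set_integral_exp_min_Jfun(1)[OF nu])
  have "xi \<nu> a m / Zsum m + K * exp (minpair \<nu> m / (1-\<nu>)) / Zsum m * gfun \<nu>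
        = Qrem \<nu> 0 m a + (LINT y:{0..}|lborel. K * exp (minpair \<nu> m / (1-\<nu>)) / Zsum m * \<psi> y)"
    unfolding Qrem_0 set_integral_mult_right \<psi>_def set_integral_exp_min_Jfun(2)[OF nu] ..
  also have "\<dots> = (LINT y:{0..}|lborel. Wrem \<nu> 0 (shift m a (Jfun \<nu> y)) * fdens \<nu> m a y
             + K * exp (minpair \<nu> m / (1-\<nu>)) / Zsum m * \<psi> y)"
    unfolding Qrem_def by (rule set_integral_add(2)[symmetric, OF set_integrable_Qrem_integrand[OF nu(1)] int_\<psi>])
  also have "\<dots> \<le> Qrem \<nu> (Suc n) m a"
    unfolding Qrem_def
    by (intro set_integral_mono set_integral_add(1) int_\<psi> set_integrable_Qrem_integrand nu)
      (unfold \<psi>_def, rule Qrem_Suc_integrand_ge[OF W K])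
  finally show ?case
    using Zsum_pos[of m] unfolding K_def S_def geometric_sum_Suc by (simp add: field_simps)
qed

end

lemma Max_range_qLB_eq_second:
  assumes nu: "0 < \<nu>" "\<nu> < 1" and x: "x1 \<noteq> x2" "\<forall>y. (m::'i::finite \<Rightarrow> real) y \<le> m x1"
    "\<forall>y. y \<noteq> x1 \<longrightarrow> m y \<le> m x2"
  shows "Max (range (qLB \<nu> L k m)) = qLB \<nu> L k m x2"
  unfolding qLB_def using xi_le_xi_second[OF nu x] Zsum_pos[of m]
  by (intro Max_range_eqI mult_left_mono add_right_mono) auto

lemma Max_range_qUB_eq_second:
  assumes nu: "0 < \<nu>" "\<nu> < 1" and x: "x1 \<noteq> x2" "\<forall>y. (m::'i::finite \<Rightarrow> real) y \<le> m x1"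
    "\<forall>y. y \<noteq> x1 \<longrightarrow> m y \<le> m x2"
  shows "Max (range (qUB \<nu> L k m)) = qUB \<nu> L k m x2"
  unfolding qUB_def using xi_le_xi_second[OF nu x] Zsum_pos[of m] hfun_pos[OF nu]
  by (intro Max_range_eqI mult_left_mono) auto

theorem theorem1:
  fixes \<nu> :: real and L :: nat
  assumes "CARD('i::finite) \<ge> 2" and "0 < \<nu>" and "\<nu> < 1" and "L \<ge> 1"
  shows "(\<forall>k < L. \<forall>(m :: 'i \<Rightarrow> real) a.
            qLB \<nu> L k m a \<le> qfun \<nu> L k m a \<and> qfun \<nu> L k m a \<le> qUB \<nu> L k m a)
       \<and> (\<forall>k < L. \<forall>(m :: 'i \<Rightarrow> real) x1 x2.
            x1 \<noteq> x2 \<and> (\<forall>y. m y \<le> m x1) \<and> (\<forall>y. y \<noteq> x1 \<longrightarrow> m y \<le> m x2) \<longrightarrow>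
              qLB \<nu> L k m x2 = Max (range (qLB \<nu> L k m))
            \<and> Max (range (qLB \<nu> L k m)) \<le> Vstar \<nu> L k m
            \<and> Vstar \<nu> L k m \<le> Max (range (qUB \<nu> L k m))
            \<and> Max (range (qUB \<nu> L k m)) = qUB \<nu> L k m x2)"
proof -
  note card = assms(1) and nu = assms(2,3)
  have bounds: "qLB \<nu> L k m a \<le> qfun \<nu> L k m a \<and> qfun \<nu> L k m a \<le> qUB \<nu> L k m a"
    if "k < L" for k and m :: "'i \<Rightarrow> real" and a
    using Qrem_ge[OF card nu, of a m] Qrem_le[OF card nu, of _ m a]
    unfolding qfun_eq_Qrem[OF that] qLB_def qUB_def by simp
  have "Max (range (qLB \<nu> L k m)) \<le> Vstar \<nu> L k m" "Vstar \<nu> L k m \<le> Max (range (qUB \<nu> L k m))"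
    if "k < L" "x1 \<noteq> x2" "\<forall>y. m y \<le> m x1" "\<forall>y. y \<noteq> x1 \<longrightarrow> m y \<le> m x2"
    for k and m :: "'i \<Rightarrow> real" and x1 x2
    unfolding Vstar_eq_Max_Qrem[OF that(1)] Max_range_qLB_eq_second[OF nu that(2-)]
    using bounds[OF that(1)] unfolding qfun_eq_Qrem[OF that(1)]
    by (meson Max_range_ge Max_range_le order_trans)+
  thus ?thesis
    using bounds Max_range_qLB_eq_second[OF nu, THEN sym] Max_range_qUB_eq_second[OF nu]
    by (auto simp del: Max_le_iff)
qed

end
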